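(* For every choice of $a>0$ and $b>0$, there exist smooth vector fields $u,v$ on $S^1=\mathbb{R}/\mathbb{Z}$ such that the sectional curvature of $\mathrm{Diff}(S^1)$ endowed with the right-invariant metric given at the identity by $\langle\!\langle u,v\rangle\!\rangle_{H^1}=\int_0^1(a\,uv+b\,u_xv_x)\,dx$ is strictly negative, i.e. $S(u,v)=\langle\!\langle R(u,v)v,u\rangle\!\rangle_{H^1}<0$.
   Context: $R$ is the Riemann curvature tensor of the Levi-Civita connection of the right-invariant metric, evaluated at the identity. *)

theory Defs
  imports "HOL-Analysis.Analysis"
begin

text \<open>Smooth vector fields on the circle S^1 = R/Z, represented as smooth 1-periodic
  real functions u (the vector field u(x) d/dx).\<close>

definition smooth_fun :: "(real \<Rightarrow> real) \<Rightarrow> bool" where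
  "smooth_fun f \<longleftrightarrow> (\<forall>n x. ((deriv ^^ n) f) differentiable (at x))"

definition vfS1 :: "(real \<Rightarrow> real) \<Rightarrow> bool" where
  "vfS1 u \<longleftrightarrow> smooth_fun u \<and> (\<forall>x. u (x + 1) = u x)"

definition H1_inner :: "real \<Rightarrow> real \<Rightarrow> (real \<Rightarrow> real) \<Rightarrow> (real \<Rightarrow> real) \<Rightarrow> real" where
  "H1_inner a b u v = integral {0..1} (\<lambda>x. a * u x * v x + b * deriv u x * deriv v x)"

text \<open>Lie bracket of the right-invariant vector fields generated by u and v
  (the usual bracket of vector fields on S^1).\<close>
definition vf_bracket :: "(real \<Rightarrow> real) \<Rightarrow> (real \<Rightarrow> real) \<Rightarrow> (real \<Rightarrow> real)" where
  "vf_bracket u v = (\<lambda>x. u x * deriv v x - deriv u x * v x)"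

text \<open>Levi-Civita connection of the right-invariant metric on right-invariant vector
  fields, evaluated at the identity, characterised by the Koszul formula
  (the metric is constant along right-invariant fields).\<close>
definition LC_conn :: "real \<Rightarrow> real \<Rightarrow> (real \<Rightarrow> real) \<Rightarrow> (real \<Rightarrow> real) \<Rightarrow> (real \<Rightarrow> real)" where
  "LC_conn a b u v = (THE w. vfS1 w \<and> (\<forall>z. vfS1 z \<longrightarrow>
      2 * H1_inner a b w z = H1_inner a b (vf_bracket u v) z
                             - H1_inner a b (vf_bracket u z) v
                             - H1_inner a b (vf_bracket v z) u))"

text \<open>Riemann curvature tensor at the identity, convention
  R(u,v)w = nabla_u nabla_v w - nabla_v nabla_u w - nabla_[u,v] w.\<close>
definition curv_R :: "real \<Rightarrow> real \<Rightarrow> (real \<Rightarrow> real) \<Rightarrow> (real \<Rightarrow> real) \<Rightarrow> (real \<Rightarrow> real) \<Rightarrow> (real \<Rightarrow> real)" where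
  "curv_R a b u v w = LC_conn a b u (LC_conn a b v w) - LC_conn a b v (LC_conn a b u w)
                      - LC_conn a b (vf_bracket u v) w"

definition sec_S :: "real \<Rightarrow> real \<Rightarrow> (real \<Rightarrow> real) \<Rightarrow> (real \<Rightarrow> real) \<Rightarrow> real" where
  "sec_S a b u v = H1_inner a b (curv_R a b u v v) u"

end

theory Submission
  imports Defs
begin

text \<open>For the right-invariant \<open>H\<^sup>1\<close> metric the inertia operator is \<open>A = a - b \<partial>\<^sup>2\<close>, and
  after integrating by parts the Koszul formula at the identity becomes the pointwise equation
  \<open>2 A (\<nabla>\<^sub>X Y) = A [X,Y] + 2 X' A Y + X (A Y)' + 2 Y' A X + Y (A X)'\<close>, whose solution is unique
  because \<open>A\<close> is positive. On trigonometric polynomials in \<open>W x\<close> with \<open>W \<in> 2\<pi>\<int>\<close> the operator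
  \<open>A\<close> is diagonal, so every covariant derivative entering \<open>R(u,v)v\<close> can be written down in closed
  form. For \<open>u = sin (W x)\<close> and \<open>v = 1 + e cos (2 W x)\<close> this gives
  \<open>S(u,v) = W\<^sup>2 P(a, b W\<^sup>2, e) / ((a + b W\<^sup>2)\<^sup>2 (a + 4 b W\<^sup>2) (a + 9 b W\<^sup>2))\<close>
  for an explicit polynomial \<open>P\<close>, which is negative for \<open>e = 3a / (2 b W\<^sup>2)\<close> as soon as
  \<open>b W\<^sup>2 \<ge> 4 a\<close>.\<close>

section \<open>Continuously differentiable periodic functions\<close>

definition C1_periodic :: "(real \<Rightarrow> real) \<Rightarrow> bool" where
  "C1_periodic f \<longleftrightarrow>
     (\<forall>x. f differentiable (at x)) \<and> continuous_on UNIV (deriv f) \<and> (\<forall>x. f (x + 1) = f x)"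

lemma C1_periodic_has_deriv: "C1_periodic f \<Longrightarrow> (f has_real_derivative deriv f x) (at x)"
  unfolding C1_periodic_def using DERIV_deriv_iff_real_differentiable by blast

lemma C1_periodic_continuous: "C1_periodic f \<Longrightarrow> continuous_on UNIV f"
  unfolding C1_periodic_def
  by (meson differentiable_at_imp_differentiable_on differentiable_imp_continuous_on)

lemma C1_periodic_continuous_deriv: "C1_periodic f \<Longrightarrow> continuous_on UNIV (deriv f)"
  unfolding C1_periodic_def by blast

lemma C1_periodic_periodic: "C1_periodic f \<Longrightarrow> f (x + 1) = f x"
  unfolding C1_periodic_def by blast

lemmas C1_periodic_continuity = C1_periodic_continuous C1_periodic_continuous_deriv

lemma
  assumes f: "C1_periodic f" and g: "C1_periodic g"
  shows C1_periodic_diff: "C1_periodic (\<lambda>x. f x - g x)"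
    and deriv_diff_C1_periodic: "deriv (\<lambda>x. f x - g x) = (\<lambda>x. deriv f x - deriv g x)"
    and C1_periodic_mult: "C1_periodic (\<lambda>x. f x * g x)"
    and deriv_mult_C1_periodic: "deriv (\<lambda>x. f x * g x) = (\<lambda>x. deriv f x * g x + f x * deriv g x)"
proof -
  note D = C1_periodic_has_deriv[OF f] C1_periodic_has_deriv[OF g]
  note C = C1_periodic_continuity[OF f] C1_periodic_continuity[OF g]
  show diff: "deriv (\<lambda>x. f x - g x) = (\<lambda>x. deriv f x - deriv g x)"
    and mult: "deriv (\<lambda>x. f x * g x) = (\<lambda>x. deriv f x * g x + f x * deriv g x)"
    by (auto intro!: ext DERIV_imp_deriv derivative_eq_intros D)
  show "C1_periodic (\<lambda>x. f x - g x)" "C1_periodic (\<lambda>x. f x * g x)"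
    using f g C unfolding C1_periodic_def diff mult by (auto intro!: continuous_intros)
qed

lemma
  assumes f: "C1_periodic f"
  shows C1_periodic_cmult: "C1_periodic (\<lambda>x. c * f x)"
    and deriv_cmult_C1_periodic: "deriv (\<lambda>x. c * f x) = (\<lambda>x. c * deriv f x)"
proof -
  show cmult: "deriv (\<lambda>x. c * f x) = (\<lambda>x. c * deriv f x)"
    by (auto intro!: ext DERIV_imp_deriv DERIV_cmult C1_periodic_has_deriv f)
  show "C1_periodic (\<lambda>x. c * f x)"
    using f unfolding C1_periodic_def cmult by (auto intro!: continuous_intros)
qed

lemma integrable_on_unit_interval: "continuous_on UNIV (f :: real \<Rightarrow> real) \<Longrightarrow> f integrable_on {0..1}"
  by (rule integrable_continuous_interval, rule continuous_on_subset[of UNIV]) auto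

lemma integral_unit_interval_by_parts:
  assumes f: "C1_periodic f" and g: "C1_periodic g"
  shows "integral {0..1} (\<lambda>x. f x * deriv g x) = - integral {0..1} (\<lambda>x. deriv f x * g x)"
proof -
  have "((\<lambda>x. deriv f x * g x + f x * deriv g x) has_integral (f 1 * g 1 - f 0 * g 0)) {0..1}"
  proof (rule fundamental_theorem_of_calculus)
    fix x :: real
    have "((\<lambda>x. f x * g x) has_real_derivative deriv f x * g x + f x * deriv g x) (at x)"
      by (auto intro!: derivative_eq_intros C1_periodic_has_deriv f g)
    then show "((\<lambda>x. f x * g x) has_vector_derivative deriv f x * g x + f x * deriv g x)
        (at x within {0..1})"
      using DERIV_subset has_real_derivative_iff_has_vector_derivative by blast
  qed simp
  moreover have "f 1 * g 1 - f 0 * g 0 = 0"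
    using C1_periodic_periodic[OF f, of 0] C1_periodic_periodic[OF g, of 0] by simp
  ultimately have "integral {0..1} (\<lambda>x. deriv f x * g x + f x * deriv g x) = 0"
    by (simp add: integral_unique)
  moreover have "integral {0..1} (\<lambda>x. deriv f x * g x + f x * deriv g x)
      = integral {0..1} (\<lambda>x. deriv f x * g x) + integral {0..1} (\<lambda>x. f x * deriv g x)"
    by (intro integral_add integrable_on_unit_interval continuous_on_mult
        C1_periodic_continuity[OF f] C1_periodic_continuity[OF g])
  ultimately show ?thesis by linarith
qed

lemma periodic_shift_int:
  assumes "\<And>x. f (x + 1) = f x"
  shows "f (x + of_int n) = f (x :: real)"
proof (induction n rule: int_induct[where k = 0])
  case (step1 i)
  then show ?case using assms[of "x + of_int i"] by (simp add: add.assoc)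
next
  case (step2 i)
  then show ?case using assms[of "x + of_int (i - 1)"] by (simp add: add.assoc)
qed simp

lemma periodic_eq_0_if_eq_0_on_unit_interval:
  fixes f :: "real \<Rightarrow> real"
  assumes "\<And>x. f (x + 1) = f x" and "\<And>y. y \<in> {0..1} \<Longrightarrow> f y = 0"
  shows "f x = 0"
proof -
  have "f x = f (frac x)"
    using periodic_shift_int[of f x "- \<lfloor>x\<rfloor>", OF assms(1)] by (simp add: frac_def)
  then show ?thesis using assms(2) frac_ge_0[of x] frac_lt_1[of x] by simp
qed


section \<open>Smooth vector fields\<close>

lemma vfS1_deriv: "vfS1 f \<Longrightarrow> vfS1 (deriv f)"
proof -
  assume f: "vfS1 f"
  have smooth: "smooth_fun (deriv f)"
    using f unfolding vfS1_def smooth_fun_def by (metis comp_apply funpow_Suc_right)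
  have "(f has_real_derivative deriv f (x + 1)) (at (x + 1))" for x
    using f unfolding vfS1_def smooth_fun_def
    by (metis DERIV_deriv_iff_real_differentiable funpow_0)
  then have "((\<lambda>y. f (y + 1)) has_real_derivative deriv f (x + 1)) (at x)" for x
    using DERIV_shift by blast
  moreover have "(\<lambda>y. f (y + 1)) = f" using f unfolding vfS1_def by auto
  ultimately have "deriv f (x + 1) = deriv f x" for x by (metis DERIV_imp_deriv)
  with smooth show ?thesis unfolding vfS1_def by blast
qed

lemma vfS1_imp_C1_periodic: "vfS1 f \<Longrightarrow> C1_periodic f"
proof -
  assume f: "vfS1 f"
  then have "(deriv ^^ n) f differentiable (at x)" for n x
    unfolding vfS1_def smooth_fun_def by blast
  from this[of 0] this[of 1] have "f differentiable (at x)" "deriv f differentiable (at x)" for x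
    by simp_all
  then show ?thesis
    using f unfolding C1_periodic_def vfS1_def
    by (meson differentiable_at_imp_differentiable_on differentiable_imp_continuous_on)
qed

lemma vfS1_C1_periodic_derivs:
  assumes "vfS1 f"
  shows "C1_periodic f" "C1_periodic (deriv f)" "C1_periodic (deriv (deriv f))"
    "C1_periodic (deriv (deriv (deriv f)))"
  using assms vfS1_imp_C1_periodic vfS1_deriv by blast+

lemma smooth_fun_diff:
  assumes "smooth_fun f" and "smooth_fun g"
  shows "smooth_fun (\<lambda>x. f x - g x)"
proof -
  have "(deriv ^^ n) (\<lambda>x. f x - g x) = (\<lambda>x. (deriv ^^ n) f x - (deriv ^^ n) g x)"
    if "smooth_fun f" "smooth_fun g" for n and f g :: "real \<Rightarrow> real"
    using that
  proof (induction n arbitrary: f g)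
    case (Suc n)
    have "f differentiable (at x)" "g differentiable (at x)" for x
      using Suc.prems unfolding smooth_fun_def by (metis funpow_0)+
    then have "deriv (\<lambda>x. f x - g x) = (\<lambda>x. deriv f x - deriv g x)"
      by (auto intro!: ext DERIV_imp_deriv derivative_intros
          simp: DERIV_deriv_iff_real_differentiable)
    moreover have "smooth_fun (deriv f)" "smooth_fun (deriv g)"
      using Suc.prems unfolding smooth_fun_def by (metis comp_apply funpow_Suc_right)+
    ultimately show ?case
      using Suc.IH by (simp only: funpow_Suc_right comp_apply)
  qed simp
  with assms show ?thesis
    unfolding smooth_fun_def by (simp add: differentiable_diff)
qed

lemma vfS1_diff: "vfS1 f \<Longrightarrow> vfS1 g \<Longrightarrow> vfS1 (\<lambda>x. f x - g x)"
  unfolding vfS1_def using smooth_fun_diff by simp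


section \<open>The \<open>H\<^sup>1\<close> inner product and the Koszul formula\<close>

definition inertia :: "real \<Rightarrow> real \<Rightarrow> (real \<Rightarrow> real) \<Rightarrow> real \<Rightarrow> real" where
  "inertia a b f = (\<lambda>x. a * f x - b * deriv (deriv f) x)"

lemma H1_inner_commute: "H1_inner a b f g = H1_inner a b g f"
  unfolding H1_inner_def by (simp add: ac_simps)

lemma H1_inner_eq_integral_inertia:
  assumes w: "C1_periodic w" "C1_periodic (deriv w)" and z: "C1_periodic z"
  shows "H1_inner a b w z = integral {0..1} (\<lambda>x. inertia a b w x * z x)"
proof -
  note C = C1_periodic_continuity[OF w(1)] C1_periodic_continuity[OF w(2)]
    C1_periodic_continuity[OF z]
  have "H1_inner a b w z
      = a * integral {0..1} (\<lambda>x. w x * z x) + b * integral {0..1} (\<lambda>x. deriv w x * deriv z x)"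
    unfolding H1_inner_def
    by (subst integral_add) (auto intro!: integrable_on_unit_interval continuous_intros C
        simp: mult.assoc)
  also have "integral {0..1} (\<lambda>x. deriv w x * deriv z x)
      = - integral {0..1} (\<lambda>x. deriv (deriv w) x * z x)"
    by (rule integral_unit_interval_by_parts[OF w(2) z])
  also have "a * integral {0..1} (\<lambda>x. w x * z x)
        + b * - integral {0..1} (\<lambda>x. deriv (deriv w) x * z x)
      = integral {0..1} (\<lambda>x. a * (w x * z x)) - integral {0..1} (\<lambda>x. b * (deriv (deriv w) x * z x))"
    by simp
  also have "\<dots> = integral {0..1} (\<lambda>x. inertia a b w x * z x)"
    unfolding inertia_def
    by (subst integral_diff[symmetric])
      (auto intro!: integrable_on_unit_interval continuous_intros C simp: algebra_simps)
  finally show ?thesis .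
qed

lemma deriv_inertia:
  assumes "vfS1 f"
  shows "deriv (inertia a b f) = inertia a b (deriv f)"
    and "C1_periodic (inertia a b f)"
proof -
  note f = vfS1_C1_periodic_derivs[OF assms]
  have "deriv (\<lambda>x. b * deriv (deriv f) x) = (\<lambda>x. b * deriv (deriv (deriv f)) x)"
    using deriv_cmult_C1_periodic[OF f(3)] .
  then show "deriv (inertia a b f) = inertia a b (deriv f)"
    unfolding inertia_def
    using deriv_diff_C1_periodic[OF C1_periodic_cmult[OF f(1)] C1_periodic_cmult[OF f(3)]]
      deriv_cmult_C1_periodic[OF f(1)] by simp
  show "C1_periodic (inertia a b f)"
    unfolding inertia_def by (intro C1_periodic_diff C1_periodic_cmult f)
qed

lemma H1_inner_bracket_eq_integral:
  assumes X: "vfS1 X" and Y: "vfS1 Y" and z: "vfS1 z"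
  shows "H1_inner a b (vf_bracket X z) Y
    = - integral {0..1}
          (\<lambda>x. z x * (2 * deriv X x * inertia a b Y x + X x * inertia a b (deriv Y) x))"
proof -
  note x = vfS1_C1_periodic_derivs[OF X] and y = vfS1_C1_periodic_derivs[OF Y]
    and zz = vfS1_C1_periodic_derivs[OF z]
  define AY where "AY = inertia a b Y"
  have AY: "C1_periodic AY" "deriv AY = inertia a b (deriv Y)"
    unfolding AY_def using deriv_inertia[OF Y] by simp_all
  have bracket: "C1_periodic (vf_bracket X z)"
    unfolding vf_bracket_def by (intro C1_periodic_diff C1_periodic_mult x zz)
  note C = C1_periodic_continuity[OF x(1)] C1_periodic_continuity[OF AY(1)]
    C1_periodic_continuity[OF zz(1)]
  have "H1_inner a b (vf_bracket X z) Y = integral {0..1} (\<lambda>x. AY x * vf_bracket X z x)"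
    unfolding AY_def H1_inner_commute[of a b "vf_bracket X z"]
    by (rule H1_inner_eq_integral_inertia[OF y(1,2) bracket])
  also have "\<dots> = integral {0..1} (\<lambda>x. (AY x * X x) * deriv z x)
      - integral {0..1} (\<lambda>x. AY x * deriv X x * z x)"
    unfolding vf_bracket_def
    by (subst integral_diff[symmetric])
      (auto intro!: integrable_on_unit_interval continuous_intros C simp: algebra_simps)
  also have "integral {0..1} (\<lambda>x. (AY x * X x) * deriv z x)
      = - integral {0..1} (\<lambda>x. (deriv AY x * X x + AY x * deriv X x) * z x)"
    using integral_unit_interval_by_parts[OF C1_periodic_mult[OF AY(1) x(1)] zz(1)]
    unfolding deriv_mult_C1_periodic[OF AY(1) x(1)] .
  finally have "H1_inner a b (vf_bracket X z) Y
      = - integral {0..1} (\<lambda>x. (deriv AY x * X x + AY x * deriv X x) * z x)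
        - integral {0..1} (\<lambda>x. AY x * deriv X x * z x)" .
  moreover have "integral {0..1} (\<lambda>x. (deriv AY x * X x + AY x * deriv X x) * z x)
      + integral {0..1} (\<lambda>x. AY x * deriv X x * z x)
      = integral {0..1} (\<lambda>x. z x * (2 * deriv X x * AY x + X x * deriv AY x))"
    by (subst integral_add[symmetric])
      (auto intro!: integrable_on_unit_interval continuous_intros C simp: algebra_simps)
  ultimately show ?thesis unfolding AY_def deriv_inertia(1)[OF Y] by linarith
qed

lemma H1_inner_diff_left:
  assumes f: "C1_periodic f" and g: "C1_periodic g" and z: "C1_periodic z"
  shows "H1_inner a b (\<lambda>x. f x - g x) z = H1_inner a b f z - H1_inner a b g z"
  unfolding H1_inner_def deriv_diff_C1_periodic[OF f g]
  by (subst integral_diff[symmetric]) (auto intro!: integrable_on_unit_interval continuous_intros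
      C1_periodic_continuity[OF f] C1_periodic_continuity[OF g] C1_periodic_continuity[OF z]
      simp: algebra_simps)

lemma H1_inner_self_eq_0_imp_eq_0:
  assumes a: "a > 0" and b: "b \<ge> 0" and d: "C1_periodic d" and "H1_inner a b d d = 0"
  shows "d = (\<lambda>x. 0)"
proof -
  let ?g = "\<lambda>x. a * d x * d x + b * deriv d x * deriv d x"
  have g_cont: "continuous_on (cbox 0 1) ?g"
    by (rule continuous_on_subset[of UNIV])
      (auto intro!: continuous_intros C1_periodic_continuity[OF d])
  have "(?g has_integral 0) (cbox 0 1)"
    using integrable_integral[OF integrable_continuous[OF g_cont]] assms(4)
    unfolding H1_inner_def by simp
  then have g_zero: "?g y = 0" if "y \<in> {0..1}" for y
    using has_integral_0_cbox_imp_0[OF g_cont _ _ _, of y] a b that by (simp add: mult.assoc)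
  have "d y = 0" if "y \<in> {0..1}" for y
  proof -
    have "a * d y * d y \<ge> 0" "b * deriv d y * deriv d y \<ge> 0"
      using a b by (simp_all add: mult.assoc)
    with g_zero[OF that] have "a * (d y * d y) = 0" by (simp only: mult.assoc)
    with a show ?thesis by simp
  qed
  then show ?thesis
    using periodic_eq_0_if_eq_0_on_unit_interval C1_periodic_periodic[OF d] by blast
qed

definition koszul_solution ::
    "real \<Rightarrow> real \<Rightarrow> (real \<Rightarrow> real) \<Rightarrow> (real \<Rightarrow> real) \<Rightarrow> (real \<Rightarrow> real) \<Rightarrow> bool" where
  "koszul_solution a b X Y w \<longleftrightarrow> vfS1 w \<and> (\<forall>z. vfS1 z \<longrightarrow>
      2 * H1_inner a b w z = H1_inner a b (vf_bracket X Y) z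
                             - H1_inner a b (vf_bracket X z) Y
                             - H1_inner a b (vf_bracket Y z) X)"

lemma koszul_solution_unique:
  assumes a: "a > 0" and b: "b \<ge> 0"
    and w1: "koszul_solution a b X Y w1" and w2: "koszul_solution a b X Y w2"
  shows "w1 = w2"
proof -
  have v: "vfS1 w1" "vfS1 w2" using w1 w2 koszul_solution_def by auto
  define d where "d = (\<lambda>x. w1 x - w2 x)"
  have d: "vfS1 d" unfolding d_def using vfS1_diff v by auto
  then have "2 * H1_inner a b w1 d = 2 * H1_inner a b w2 d"
    using w1 w2 unfolding koszul_solution_def by simp
  moreover have "H1_inner a b d d = H1_inner a b w1 d - H1_inner a b w2 d"
    unfolding d_def
    by (rule H1_inner_diff_left) (use v d[unfolded d_def] vfS1_imp_C1_periodic in auto)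
  ultimately have "H1_inner a b d d = 0" by simp
  then have "d = (\<lambda>x. 0)"
    using H1_inner_self_eq_0_imp_eq_0[OF a b] vfS1_imp_C1_periodic[OF d] by blast
  then show ?thesis unfolding d_def by (simp add: fun_eq_iff)
qed

lemma LC_conn_eqI:
  assumes "a > 0" and "b \<ge> 0" and "koszul_solution a b X Y w"
  shows "LC_conn a b X Y = w"
  using assms koszul_solution_unique[OF assms(1,2)]
  unfolding LC_conn_def koszul_solution_def[symmetric] by blast

lemma
  assumes X: "vfS1 X" and Y: "vfS1 Y"
  shows C1_periodic_vf_bracket:
      "C1_periodic (vf_bracket X Y)" "C1_periodic (deriv (vf_bracket X Y))"
    and deriv2_vf_bracket: "deriv (deriv (vf_bracket X Y)) = (\<lambda>x. deriv X x * deriv (deriv Y) x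
      + X x * deriv (deriv (deriv Y)) x - deriv (deriv (deriv X)) x * Y x
      - deriv (deriv X) x * deriv Y x)"
proof -
  note x = vfS1_C1_periodic_derivs[OF X] and y = vfS1_C1_periodic_derivs[OF Y]
  show "C1_periodic (vf_bracket X Y)"
    unfolding vf_bracket_def by (intro C1_periodic_diff C1_periodic_mult x y)
  have D: "deriv (vf_bracket X Y) = (\<lambda>x. X x * deriv (deriv Y) x - deriv (deriv X) x * Y x)"
    unfolding vf_bracket_def
    by (simp add: deriv_diff_C1_periodic deriv_mult_C1_periodic C1_periodic_mult x y)
  show "C1_periodic (deriv (vf_bracket X Y))"
    unfolding D by (intro C1_periodic_diff C1_periodic_mult x y)
  show "deriv (deriv (vf_bracket X Y)) = (\<lambda>x. deriv X x * deriv (deriv Y) x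
      + X x * deriv (deriv (deriv Y)) x - deriv (deriv (deriv X)) x * Y x
      - deriv (deriv X) x * deriv Y x)"
    unfolding D
    by (simp add: deriv_diff_C1_periodic deriv_mult_C1_periodic C1_periodic_mult x y algebra_simps)
qed

lemma koszul_solutionI:
  assumes X: "vfS1 X" and Y: "vfS1 Y" and W: "vfS1 W"
    and pointwise: "\<And>x. 2 * inertia a b W x = inertia a b (vf_bracket X Y) x
       + 2 * deriv X x * inertia a b Y x + X x * inertia a b (deriv Y) x
       + 2 * deriv Y x * inertia a b X x + Y x * inertia a b (deriv X) x"
  shows "koszul_solution a b X Y W"
  unfolding koszul_solution_def
proof (intro conjI allI impI W)
  fix z assume z: "vfS1 z"
  note w = vfS1_C1_periodic_derivs[OF W] and zz = vfS1_C1_periodic_derivs[OF z]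
  define F where "F X Y x = 2 * deriv X x * inertia a b Y x + X x * inertia a b (deriv Y) x"
    for X Y :: "real \<Rightarrow> real" and x
  have cont: "continuous_on UNIV (inertia a b f)" "continuous_on UNIV (F f g)"
    if "vfS1 f" "vfS1 g" for f g
    unfolding F_def
    by (intro continuous_intros C1_periodic_continuous deriv_inertia(2) vfS1_deriv that
        vfS1_C1_periodic_derivs(1,2)[OF that(1)])+
  have bracket_cont: "continuous_on UNIV (inertia a b (vf_bracket X Y))"
    using C1_periodic_continuity[OF C1_periodic_vf_bracket(1)[OF X Y]]
      C1_periodic_continuity[OF C1_periodic_vf_bracket(2)[OF X Y]]
    unfolding inertia_def by (intro continuous_intros)
  have "2 * H1_inner a b W z = integral {0..1} (\<lambda>x. 2 * (inertia a b W x * z x))"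
    using H1_inner_eq_integral_inertia[OF w(1,2) zz(1)] by simp
  also have "\<dots> = integral {0..1} (\<lambda>x. inertia a b (vf_bracket X Y) x * z x
      + z x * F X Y x + z x * F Y X x)"
    using pointwise unfolding F_def by (intro integral_cong) (simp add: algebra_simps)
  also have "\<dots> = integral {0..1} (\<lambda>x. inertia a b (vf_bracket X Y) x * z x)
      + integral {0..1} (\<lambda>x. z x * F X Y x) + integral {0..1} (\<lambda>x. z x * F Y X x)"
    using cont[OF X Y] cont[OF Y X] bracket_cont C1_periodic_continuous[OF zz(1)]
    by (simp add: integral_add integrable_on_unit_interval continuous_intros)
  also have "\<dots> = H1_inner a b (vf_bracket X Y) z - H1_inner a b (vf_bracket X z) Y
      - H1_inner a b (vf_bracket Y z) X"
    using H1_inner_eq_integral_inertia[OF C1_periodic_vf_bracket[OF X Y] zz(1)]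
      H1_inner_bracket_eq_integral[OF X Y z] H1_inner_bracket_eq_integral[OF Y X z]
    unfolding F_def by simp
  finally show "2 * H1_inner a b W z = H1_inner a b (vf_bracket X Y) z
      - H1_inner a b (vf_bracket X z) Y - H1_inner a b (vf_bracket Y z) X" .
qed

section \<open>Trigonometric polynomials\<close>

definition trig_poly :: "real \<Rightarrow> (nat \<Rightarrow> real) \<Rightarrow> (nat \<Rightarrow> real) \<Rightarrow> real \<Rightarrow> real" where
  "trig_poly W c s = (\<lambda>x. c 0 + c 1 * cos (W * x) + s 1 * sin (W * x)
     + c 2 * cos (2 * (W * x)) + s 2 * sin (2 * (W * x))
     + c 3 * cos (3 * (W * x)) + s 3 * sin (3 * (W * x))
     + c 4 * cos (4 * (W * x)) + s 4 * sin (4 * (W * x))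
     + c 5 * cos (5 * (W * x)) + s 5 * sin (5 * (W * x)))"

lemma trig_poly_has_real_derivative:
  "(trig_poly W c s has_real_derivative
     trig_poly W (\<lambda>j. real j * W * s j) (\<lambda>j. - (real j * W * c j)) x) (at x)"
  unfolding trig_poly_def by (rule derivative_eq_intros | simp)+

lemma deriv_trig_poly:
  "deriv (trig_poly W c s) = trig_poly W (\<lambda>j. real j * W * s j) (\<lambda>j. - (real j * W * c j))"
  by (rule ext, rule DERIV_imp_deriv, rule trig_poly_has_real_derivative)

lemma smooth_fun_trig_poly: "smooth_fun (trig_poly W c s)"
proof -
  have "\<exists>c' s'. (deriv ^^ n) (trig_poly W c s) = trig_poly W c' s'" for n
  proof (induction n)
    case (Suc n)
    then obtain c' s' where "(deriv ^^ n) (trig_poly W c s) = trig_poly W c' s'" by blast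
    then show ?case by (auto simp: deriv_trig_poly)
  qed auto
  then show ?thesis
    unfolding smooth_fun_def using trig_poly_has_real_derivative real_differentiable_def by metis
qed

lemma cos_sin_shift_period:
  assumes "W = 2 * pi * real k"
  shows "cos (real m * (W * (x + 1))) = cos (real m * (W * x))"
    and "sin (real m * (W * (x + 1))) = sin (real m * (W * x))"
proof -
  have shift: "real m * (W * (x + 1)) = real m * (W * x) + 2 * pi * real (m * k)"
    using assms by (simp add: algebra_simps)
  have "real (m * k) \<in> \<int>" by simp
  then show "cos (real m * (W * (x + 1))) = cos (real m * (W * x))"
    and "sin (real m * (W * (x + 1))) = sin (real m * (W * x))"
    unfolding shift cos_add sin_add by (simp_all add: cos_integer_2pi sin_integer_2pi)
qed

lemma trig_poly_periodic:
  assumes "W = 2 * pi * real k"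
  shows "trig_poly W c s (x + 1) = trig_poly W c s x"
  using cos_sin_shift_period[OF assms, of 1 x]
    cos_sin_shift_period[OF assms, of "numeral n" x for n]
  unfolding trig_poly_def by simp

lemma vfS1_trig_poly: "W = 2 * pi * real k \<Longrightarrow> vfS1 (trig_poly W c s)"
  unfolding vfS1_def using smooth_fun_trig_poly trig_poly_periodic by blast

lemma trig_poly_diff:
  "trig_poly W c s - trig_poly W c' s' = trig_poly W (\<lambda>j. c j - c' j) (\<lambda>j. s j - s' j)"
  unfolding trig_poly_def by (simp add: fun_eq_iff algebra_simps)

lemma cos_sin_multiple_angle:
  fixes t :: real
  shows "cos (2 * t) = 2 * cos t ^ 2 - 1"
    and "sin (2 * t) = 2 * sin t * cos t"
    and "cos (3 * t) = 4 * cos t ^ 3 - 3 * cos t"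
    and "sin (3 * t) = sin t * (4 * cos t ^ 2 - 1)"
    and "cos (4 * t) = 8 * cos t ^ 4 - 8 * cos t ^ 2 + 1"
    and "sin (4 * t) = sin t * (8 * cos t ^ 3 - 4 * cos t)"
    and "cos (5 * t) = 16 * cos t ^ 5 - 20 * cos t ^ 3 + 5 * cos t"
    and "sin (5 * t) = sin t * (16 * cos t ^ 4 - 12 * cos t ^ 2 + 1)"
    and "cos (6 * t) = 32 * cos t ^ 6 - 48 * cos t ^ 4 + 18 * cos t ^ 2 - 1"
    and "sin (6 * t) = sin t * (32 * cos t ^ 5 - 32 * cos t ^ 3 + 6 * cos t)"
proof -
  have pyth: "sin t ^ 2 + cos t ^ 2 = 1" by simp
  have cos_step: "cos ((m + 1) * t) = cos (m * t) * cos t - sin (m * t) * sin t"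
    and sin_step: "sin ((m + 1) * t) = sin (m * t) * cos t + cos (m * t) * sin t" for m :: real
    by (simp_all add: distrib_right cos_add sin_add)
  show c2: "cos (2 * t) = 2 * cos t ^ 2 - 1" by (simp add: cos_double_cos)
  show s2: "sin (2 * t) = 2 * sin t * cos t" by (simp add: sin_double)
  show c3: "cos (3 * t) = 4 * cos t ^ 3 - 3 * cos t"
    using cos_step[of 2, simplified] c2 s2 pyth by algebra
  show s3: "sin (3 * t) = sin t * (4 * cos t ^ 2 - 1)"
    using sin_step[of 2, simplified] c2 s2 pyth by algebra
  show c4: "cos (4 * t) = 8 * cos t ^ 4 - 8 * cos t ^ 2 + 1"
    using cos_step[of 3, simplified] c3 s3 pyth by algebra
  show s4: "sin (4 * t) = sin t * (8 * cos t ^ 3 - 4 * cos t)"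
    using sin_step[of 3, simplified] c3 s3 pyth by algebra
  show c5: "cos (5 * t) = 16 * cos t ^ 5 - 20 * cos t ^ 3 + 5 * cos t"
    using cos_step[of 4, simplified] c4 s4 pyth by algebra
  show s5: "sin (5 * t) = sin t * (16 * cos t ^ 4 - 12 * cos t ^ 2 + 1)"
    using sin_step[of 4, simplified] c4 s4 pyth by algebra
  show "cos (6 * t) = 32 * cos t ^ 6 - 48 * cos t ^ 4 + 18 * cos t ^ 2 - 1"
    using cos_step[of 5, simplified] c5 s5 pyth by algebra
  show "sin (6 * t) = sin t * (32 * cos t ^ 5 - 32 * cos t ^ 3 + 6 * cos t)"
    using sin_step[of 5, simplified] c5 s5 pyth by algebra
qed

definition trig_poly_sin_primitive :: "real \<Rightarrow> (nat \<Rightarrow> real) \<Rightarrow> (nat \<Rightarrow> real) \<Rightarrow> real \<Rightarrow> real" where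
  "trig_poly_sin_primitive W c s x =
     - c 0 * cos (W * x) / W
   + c 1 / 2 * (- cos (2 * (W * x)) / W / 2)
   + s 1 / 2 * (- sin (2 * (W * x)) / W / 2)
   + c 2 / 2 * (- cos (3 * (W * x)) / W / 3 + cos (W * x) / W)
   + s 2 / 2 * (sin (W * x) / W - sin (3 * (W * x)) / W / 3)
   + c 3 / 2 * (- cos (4 * (W * x)) / W / 4 + cos (2 * (W * x)) / W / 2)
   + s 3 / 2 * (sin (2 * (W * x)) / W / 2 - sin (4 * (W * x)) / W / 4)
   + c 4 / 2 * (- cos (5 * (W * x)) / W / 5 + cos (3 * (W * x)) / W / 3)
   + s 4 / 2 * (sin (3 * (W * x)) / W / 3 - sin (5 * (W * x)) / W / 5)
   + c 5 / 2 * (- cos (6 * (W * x)) / W / 6 + cos (4 * (W * x)) / W / 4)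
   + s 5 / 2 * (sin (4 * (W * x)) / W / 4 - sin (6 * (W * x)) / W / 6)
   + s 1 / 2 * x"

lemma trig_poly_sin_primitive_has_real_derivative:
  assumes "W \<noteq> 0"
  shows "(trig_poly_sin_primitive W c s has_real_derivative trig_poly W c s x * sin (W * x)) (at x)"
proof -
  \<comment> \<open>naming \<open>1 / W\<close> lets \<open>algebra\<close> treat it as a variable subject to \<open>W * iW = 1\<close>\<close>
  define iW where "iW = 1 / W"
  have iW: "W * iW = 1" using assms unfolding iW_def by simp
  have primitive: "trig_poly_sin_primitive W c s = (\<lambda>x. - c 0 * cos (W * x) * iW
   + c 1 / 2 * (- cos (2 * (W * x)) * iW / 2)
   + s 1 / 2 * (- sin (2 * (W * x)) * iW / 2)
   + c 2 / 2 * (- cos (3 * (W * x)) * iW / 3 + cos (W * x) * iW)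
   + s 2 / 2 * (sin (W * x) * iW - sin (3 * (W * x)) * iW / 3)
   + c 3 / 2 * (- cos (4 * (W * x)) * iW / 4 + cos (2 * (W * x)) * iW / 2)
   + s 3 / 2 * (sin (2 * (W * x)) * iW / 2 - sin (4 * (W * x)) * iW / 4)
   + c 4 / 2 * (- cos (5 * (W * x)) * iW / 5 + cos (3 * (W * x)) * iW / 3)
   + s 4 / 2 * (sin (3 * (W * x)) * iW / 3 - sin (5 * (W * x)) * iW / 5)
   + c 5 / 2 * (- cos (6 * (W * x)) * iW / 6 + cos (4 * (W * x)) * iW / 4)
   + s 5 / 2 * (sin (4 * (W * x)) * iW / 4 - sin (6 * (W * x)) * iW / 6)
   + s 1 / 2 * x)"
    unfolding trig_poly_sin_primitive_def iW_def by (simp add: fun_eq_iff)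
  show ?thesis
    unfolding primitive
    apply (rule derivative_eq_intros refl | simp only: mult_1_right mult_0_right)+
    unfolding trig_poly_def cos_sin_multiple_angle
    using iW sin_cos_squared_add[of "W * x"] by algebra
qed

lemma integral_trig_poly_mult_sin:
  assumes W: "W = 2 * pi * real k" and "k \<ge> 1"
  shows "integral {0..1} (\<lambda>x. trig_poly W c s x * sin (W * x)) = s 1 / 2"
proof -
  have "W \<noteq> 0" using assms by simp
  have "((\<lambda>x. trig_poly W c s x * sin (W * x)) has_integral
      (trig_poly_sin_primitive W c s 1 - trig_poly_sin_primitive W c s 0)) {0..1}"
  proof (rule fundamental_theorem_of_calculus)
    fix x :: real
    show "(trig_poly_sin_primitive W c s has_vector_derivative trig_poly W c s x * sin (W * x))
        (at x within {0..1})"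
      using trig_poly_sin_primitive_has_real_derivative[OF \<open>W \<noteq> 0\<close>]
        DERIV_subset has_real_derivative_iff_has_vector_derivative by blast
  qed simp
  moreover have "trig_poly_sin_primitive W c s 1 - trig_poly_sin_primitive W c s 0 = s 1 / 2"
    using cos_sin_shift_period[OF W, of 1 0] cos_sin_shift_period[OF W, of "numeral n" 0 for n]
    unfolding trig_poly_sin_primitive_def by simp
  ultimately show ?thesis by (simp add: integral_unique)
qed

text \<open>The inertia operator acts on the harmonics \<open>cos (j W x)\<close>, \<open>sin (j W x)\<close> as multiplication
  by \<open>a + b W\<^sup>2 j\<^sup>2\<close>.\<close>

definition inv_inertia_eigenvalue :: "real \<Rightarrow> real \<Rightarrow> real \<Rightarrow> nat \<Rightarrow> real" where
  "inv_inertia_eigenvalue a b W j = 1 / (a + b * W^2 * (real j)^2)"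

lemma inv_inertia_eigenvalue_pos: "a > 0 \<Longrightarrow> b \<ge> 0 \<Longrightarrow> inv_inertia_eigenvalue a b W j > 0"
  unfolding inv_inertia_eigenvalue_def by (intro divide_pos_pos add_pos_nonneg) auto

lemma inv_inertia_eigenvalue_eqs:
  fixes a b W :: real
  assumes "a > 0" and "b \<ge> 0"
  defines "L \<equiv> inv_inertia_eigenvalue a b W"
  shows "(a + b * W^2) * L 1 = 1" "(a + b * W^2 * 4) * L 2 = 1" "(a + b * W^2 * 9) * L 3 = 1"
    "(a + b * W^2 * 16) * L 4 = 1" "(a + b * W^2 * 25) * L 5 = 1"
    and "(a + b * W^2) * L (Suc 0) = 1" \<comment> \<open>the form \<open>L 1\<close> takes after simplification\<close>
proof -
  have "a + b * W^2 * (real j)^2 > 0" for j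
    using assms(1,2) by (intro add_pos_nonneg) auto
  then have "(a + b * W^2 * (real j)^2) * L j = 1" for j
    unfolding L_def inv_inertia_eigenvalue_def by (simp add: less_imp_neq[symmetric])
  from this[of 1] this[of 2] this[of 3] this[of 4] this[of 5]
  show "(a + b * W^2) * L 1 = 1" "(a + b * W^2 * 4) * L 2 = 1" "(a + b * W^2 * 9) * L 3 = 1"
    "(a + b * W^2 * 16) * L 4 = 1" "(a + b * W^2 * 25) * L 5 = 1" "(a + b * W^2) * L (Suc 0) = 1"
    by simp_all
qed

lemma LC_conn_trig_poly_eqI:
  fixes cX sX cY sY cZ sZ :: "nat \<Rightarrow> real"
  assumes "a > 0" and "b \<ge> 0" and W: "W = 2 * pi * real k"
  defines "X \<equiv> trig_poly W cX sX" and "Y \<equiv> trig_poly W cY sY" and "Z \<equiv> trig_poly W cZ sZ"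
  assumes "\<And>x. 2 * inertia a b Z x = inertia a b (vf_bracket X Y) x
       + 2 * deriv X x * inertia a b Y x + X x * inertia a b (deriv Y) x
       + 2 * deriv Y x * inertia a b X x + Y x * inertia a b (deriv X) x"
  shows "LC_conn a b X Y = Z"
  using assms vfS1_trig_poly[OF W] by (intro LC_conn_eqI koszul_solutionI) auto

section \<open>The test fields\<close>

definition test_u :: "real \<Rightarrow> real \<Rightarrow> real" where
  "test_u W = trig_poly W (\<lambda>j. 0) (\<lambda>j. if j = 1 then 1 else 0)"

definition test_v :: "real \<Rightarrow> real \<Rightarrow> real \<Rightarrow> real" where
  "test_v e W = trig_poly W (\<lambda>j. if j = 0 then 1 else if j = 2 then e else 0) (\<lambda>j. 0)"

lemma H1_inner_test_u:
  assumes W: "W = 2 * pi * real k" and k: "k \<ge> 1"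
  shows "H1_inner a b (trig_poly W c s) (test_u W) = (a + b * W^2) * s 1 / 2"
proof -
  note u = vfS1_C1_periodic_derivs[OF vfS1_trig_poly[OF W], of "\<lambda>j. 0" "\<lambda>j. if j = 1 then 1 else 0",
      folded test_u_def]
  have "H1_inner a b (trig_poly W c s) (test_u W)
      = integral {0..1} (\<lambda>x. inertia a b (test_u W) x * trig_poly W c s x)"
    unfolding H1_inner_commute[of a b "trig_poly W c s"]
    using H1_inner_eq_integral_inertia u(1,2) vfS1_imp_C1_periodic[OF vfS1_trig_poly[OF W]] by blast
  also have "\<dots> = integral {0..1} (\<lambda>x. (a + b * W^2) * (trig_poly W c s x * sin (W * x)))"
    unfolding test_u_def inertia_def deriv_trig_poly
    by (intro integral_cong) (simp add: trig_poly_def algebra_simps power2_eq_square)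
  also have "\<dots> = (a + b * W^2) * s 1 / 2"
    using integral_trig_poly_mult_sin[OF W k] by simp
  finally show ?thesis .
qed

definition bracket_uv :: "real \<Rightarrow> real \<Rightarrow> real \<Rightarrow> real" where
  "bracket_uv e W =
    trig_poly W (\<lambda>j. if j = 1 then - W * (1 + 3/2*e) else if j = 3 then W * e / 2 else 0) (\<lambda>j. 0)"

text \<open>The covariant derivatives needed for \<open>R(u,v)v\<close>: each is obtained by expanding the
  right-hand side of the pointwise Koszul equation into harmonics and dividing the \<open>j\<close>-th one by
  the eigenvalue \<open>a + j\<^sup>2 B\<close> of \<open>A\<close>, where \<open>B = b W\<^sup>2\<close>.\<close>

definition nabla_vv :: "real \<Rightarrow> real \<Rightarrow> real \<Rightarrow> real \<Rightarrow> real \<Rightarrow> real" where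
  "nabla_vv a b e W =
    (let L = inv_inertia_eigenvalue a b W; B = b * W^2 in trig_poly W
      (\<lambda>j. 0)
      (\<lambda>j.
         if j = 2 then
           W * (- 8*B*e*L 2 - 6*a*e*L 2)
         else if j = 4 then
           W * (- 12*B*e^2*L 4 - 3*a*e^2*L 4)
         else 0))"

definition nabla_uv :: "real \<Rightarrow> real \<Rightarrow> real \<Rightarrow> real \<Rightarrow> real \<Rightarrow> real" where
  "nabla_uv a b e W =
    (let L = inv_inertia_eigenvalue a b W; B = b * W^2 in trig_poly W
      (\<lambda>j.
         if j = 1 then
           W * (- 1/2 - 3/4*e + 1/2*B*L 1 - 3/4*B*e*L 1 + 3/2*a*L 1 - 3/4*a*e*L 1)
         else if j = 3 then
           W * (1/4*e + 21/4*B*e*L 3 + 9/4*a*e*L 3)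
         else 0)
      (\<lambda>j. 0))"

definition nabla_u_nabla_vv :: "real \<Rightarrow> real \<Rightarrow> real \<Rightarrow> real \<Rightarrow> real \<Rightarrow> real" where
  "nabla_u_nabla_vv a b e W =
    (let L = inv_inertia_eigenvalue a b W; B = b * W^2 in trig_poly W
      (\<lambda>j. 0)
      (\<lambda>j.
         if j = 1 then
           W^2 * (6*B*e*L 2 + 6*B^2*e*L 1*L 2 + 9/2*a*e*L 2 + 21/2*a*B*e*L 1*L 2 +
                  9/2*a^2*e*L 1*L 2)
         else if j = 3 then
           W^2 * (- 2*B*e*L 2 + 15*B*e^2*L 4 - 42*B^2*e*L 2*L 3 + 117*B^2*e^2*L 3*L 4 -
                  3/2*a*e*L 2 + 15/4*a*e^2*L 4 - 99/2*a*B*e*L 2*L 3 +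
                  225/4*a*B*e^2*L 3*L 4 - 27/2*a^2*e*L 2*L 3 + 27/4*a^2*e^2*L 3*L 4)
         else if j = 5 then
           W^2 * (- 9*B*e^2*L 4 - 315*B^2*e^2*L 4*L 5 - 9/4*a*e^2*L 4 -
                  495/4*a*B*e^2*L 4*L 5 - 45/4*a^2*e^2*L 4*L 5)
         else 0))"

definition nabla_v_nabla_uv :: "real \<Rightarrow> real \<Rightarrow> real \<Rightarrow> real \<Rightarrow> real \<Rightarrow> real" where
  "nabla_v_nabla_uv a b e W =
    (let L = inv_inertia_eigenvalue a b W; B = b * W^2 in trig_poly W
      (\<lambda>j. 0)
      (\<lambda>j.
         if j = 1 then
           W^2 * (1/4 - 7/8*e^2 + 3/2*B*e*L 1 - 105/16*B*e^2*L 3 - 7/16*B*e^2*L 1 -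
                  1/4*B^2*L 1 ^ 2 - 147/16*B^2*e^2*L 1*L 3 + 9/16*B^2*e^2*L 1 ^ 2 +
                  3*a*e*L 1 - 45/16*a*e^2*L 3 - 3/16*a*e^2*L 1 - 3/2*a*B*L 1 ^ 2 -
                  63/8*a*B*e^2*L 1*L 3 + 9/8*a*B*e^2*L 1 ^ 2 - 9/4*a^2*L 1 ^ 2 -
                  27/16*a^2*e^2*L 1*L 3 + 9/16*a^2*e^2*L 1 ^ 2)
         else if j = 3 then
           W^2 * (- 1/2*e - 3/16*e^2 - 69/8*B*e*L 3 + 1/8*B*e*L 1 + 63/16*B*e^2*L 3 -
                  3/16*B*e^2*L 1 - 567/8*B^2*e*L 3 ^ 2 - 21/8*B^2*e*L 1*L 3 +
                  63/16*B^2*e^2*L 1*L 3 - 27/8*a*e*L 3 + 3/8*a*e*L 1 + 27/16*a*e^2*L 3 -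
                  3/16*a*e^2*L 1 - 54*a*B*e*L 3 ^ 2 - 9*a*B*e*L 1*L 3 +
                  45/8*a*B*e^2*L 1*L 3 - 81/8*a^2*e*L 3 ^ 2 - 27/8*a^2*e*L 1*L 3 +
                  27/16*a^2*e^2*L 1*L 3)
         else if j = 5 then
           W^2 * (- 1/16*e^2 - 95/16*B*e^2*L 5 - 21/16*B*e^2*L 3 - 1995/16*B^2*e^2*L 3*L 5
                  - 15/16*a*e^2*L 5 - 9/16*a*e^2*L 3 - 585/8*a*B*e^2*L 3*L 5 -
                  135/16*a^2*e^2*L 3*L 5)
         else 0))"

definition nabla_bracket_v :: "real \<Rightarrow> real \<Rightarrow> real \<Rightarrow> real \<Rightarrow> real \<Rightarrow> real" where
  "nabla_bracket_v a b e W =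
    (let L = inv_inertia_eigenvalue a b W; B = b * W^2 in trig_poly W
      (\<lambda>j. 0)
      (\<lambda>j.
         if j = 1 then
           W^2 * (- 1/2 + 7/4*e^2 + 1/2*B*L 1 + 3/2*B*e*L 1 + 1/4*B*e^2*L 1 + 3/2*a*L 1 +
                  3*a*e*L 1 + 3/4*a*e^2*L 1)
         else if j = 3 then
           W^2 * (e + 3/8*e^2 - 3/2*B*e*L 3 + 63/8*B*e^2*L 3 + 27/8*a*e^2*L 3)
         else if j = 5 then
           W^2 * (1/8*e^2 - 95/8*B*e^2*L 5 - 15/8*a*e^2*L 5)
         else 0))"

lemma vf_bracket_test_fields: "vf_bracket (test_u W) (test_v e W) = bracket_uv e W"
proof
  fix x
  show "vf_bracket (test_u W) (test_v e W) x = bracket_uv e W x"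
    unfolding vf_bracket_def test_u_def test_v_def bracket_uv_def deriv_trig_poly
    unfolding trig_poly_def cos_sin_multiple_angle
    apply simp
    using sin_cos_squared_add[of "W * x"] by algebra
qed

definition curv_poly :: "real \<Rightarrow> real \<Rightarrow> real \<Rightarrow> real" where
  "curv_poly a B e = 9*B^5*e^2 - 27*a*B^4*e + 65/4*a*B^4*e^2 + 18*a^2*B^3 - 87/2*a^2*B^3*e
    + 19/2*a^2*B^3*e^2 + 49/2*a^3*B^2 - 9/2*a^3*B^2*e + 15/2*a^3*B^2*e^2 + 7*a^4*B
    + 27/2*a^4*B*e + 13/2*a^4*B*e^2 + 1/2*a^5 + 3/2*a^5*e + 5/4*a^5*e^2"

context
  fixes a b e W :: real and k :: nat
  assumes a: "a > 0" and b: "b \<ge> 0" and W: "W = 2 * pi * real k"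
begin

lemmas inertia_expand = inertia_def deriv2_vf_bracket[OF vfS1_trig_poly[OF W] vfS1_trig_poly[OF W]]

lemma LC_conn_test_vv: "LC_conn a b (test_v e W) (test_v e W) = nabla_vv a b e W"
  unfolding test_v_def nabla_vv_def Let_def
  apply (rule LC_conn_trig_poly_eqI[OF a b W])
  subgoal for x
    unfolding inertia_expand
    unfolding vf_bracket_def deriv_trig_poly
    unfolding trig_poly_def cos_sin_multiple_angle
    apply simp
    using inv_inertia_eigenvalue_eqs[OF a b, of W] sin_cos_squared_add[of "W * x"] by algebra
  done

lemma LC_conn_test_uv: "LC_conn a b (test_u W) (test_v e W) = nabla_uv a b e W"
  unfolding test_u_def test_v_def nabla_uv_def Let_def
  apply (rule LC_conn_trig_poly_eqI[OF a b W])
  subgoal for x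
    unfolding inertia_expand
    unfolding vf_bracket_def deriv_trig_poly
    unfolding trig_poly_def cos_sin_multiple_angle
    apply simp
    using inv_inertia_eigenvalue_eqs[OF a b, of W] sin_cos_squared_add[of "W * x"] by algebra
  done

lemma LC_conn_test_u_nabla_vv:
  "LC_conn a b (test_u W) (nabla_vv a b e W) = nabla_u_nabla_vv a b e W"
  unfolding test_u_def nabla_vv_def nabla_u_nabla_vv_def Let_def
  apply (rule LC_conn_trig_poly_eqI[OF a b W])
  subgoal for x
    unfolding inertia_expand
    unfolding vf_bracket_def deriv_trig_poly
    unfolding trig_poly_def cos_sin_multiple_angle
    apply simp
    using inv_inertia_eigenvalue_eqs[OF a b, of W] sin_cos_squared_add[of "W * x"] by algebra
  done

lemma LC_conn_test_v_nabla_uv: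
  "LC_conn a b (test_v e W) (nabla_uv a b e W) = nabla_v_nabla_uv a b e W"
  unfolding test_v_def nabla_uv_def nabla_v_nabla_uv_def Let_def
  apply (rule LC_conn_trig_poly_eqI[OF a b W])
  subgoal for x
    unfolding inertia_expand
    unfolding vf_bracket_def deriv_trig_poly
    unfolding trig_poly_def cos_sin_multiple_angle
    apply simp
    using inv_inertia_eigenvalue_eqs[OF a b, of W] sin_cos_squared_add[of "W * x"] by algebra
  done

lemma LC_conn_bracket_test_v: "LC_conn a b (bracket_uv e W) (test_v e W) = nabla_bracket_v a b e W"
  unfolding bracket_uv_def test_v_def nabla_bracket_v_def Let_def
  apply (rule LC_conn_trig_poly_eqI[OF a b W])
  subgoal for x
    unfolding inertia_expand
    unfolding vf_bracket_def deriv_trig_poly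
    unfolding trig_poly_def cos_sin_multiple_angle
    apply simp
    using inv_inertia_eigenvalue_eqs[OF a b, of W] sin_cos_squared_add[of "W * x"] by algebra
  done

lemma curv_R_test_fields:
  "curv_R a b (test_u W) (test_v e W) (test_v e W)
    = nabla_u_nabla_vv a b e W - nabla_v_nabla_uv a b e W - nabla_bracket_v a b e W"
  unfolding curv_R_def LC_conn_test_vv LC_conn_test_uv LC_conn_test_u_nabla_vv
    LC_conn_test_v_nabla_uv vf_bracket_test_fields LC_conn_bracket_test_v ..

lemma sec_S_test_fields:
  assumes "k \<ge> 1"
  defines "L \<equiv> inv_inertia_eigenvalue a b W"
  shows "sec_S a b (test_u W) (test_v e W) = W^2 * curv_poly a (b * W^2) e * L 1 ^ 2 * L 2 * L 3"
proof -
  have "sec_S a b (test_u W) (test_v e W)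
      = H1_inner a b (nabla_u_nabla_vv a b e W - nabla_v_nabla_uv a b e W - nabla_bracket_v a b e W)
          (test_u W)"
    unfolding sec_S_def curv_R_test_fields ..
  also have "\<dots> = W^2 * curv_poly a (b * W^2) e * L 1 ^ 2 * L 2 * L 3"
    unfolding nabla_u_nabla_vv_def nabla_v_nabla_uv_def nabla_bracket_v_def Let_def trig_poly_diff
      H1_inner_test_u[OF W assms(1)]
    apply simp
    unfolding curv_poly_def L_def using inv_inertia_eigenvalue_eqs[OF a b, of W] by algebra
  finally show ?thesis .
qed

end

section \<open>Choice of the parameters\<close>

lemma curv_poly_neg:
  assumes "a > 0" and "4 * a \<le> B"
  shows "curv_poly a B (3 * a / (2 * B)) < 0"
proof -
  define e where "e = 3 * a / (2 * B)"
  define t where "t = B - 4 * a"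
  have "B > 0" and "t \<ge> 0" using assms unfolding t_def by linarith+
  then have "2 * B * e = 3 * a" unfolding e_def by simp
  then have "4 * B^2 * curv_poly a B e = - (21115/4*a^7 + 20769/2*a^6*t + 12359/2*a^5*t^2
      + 3243/2*a^4*t^3 + 787/4*a^3*t^4 + 9*a^2*t^5)"
    unfolding curv_poly_def t_def by algebra
  moreover have "21115/4*a^7 + 20769/2*a^6*t + 12359/2*a^5*t^2
      + 3243/2*a^4*t^3 + 787/4*a^3*t^4 + 9*a^2*t^5 > 0"
    using \<open>a > 0\<close> \<open>t \<ge> 0\<close> by (intro add_pos_nonneg) auto
  ultimately have "4 * B^2 * curv_poly a B e < 0" by linarith
  with \<open>B > 0\<close> show ?thesis unfolding e_def by (simp add: mult_less_0_iff)
qed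

lemma exists_large_frequency:
  fixes a b :: real
  assumes "b > 0"
  shows "\<exists>k::nat. k \<ge> 1 \<and> 4 * a \<le> b * (2 * pi * real k)^2"
proof -
  define k where "k = nat \<lceil>a / b\<rceil> + 1"
  have "k \<ge> 1" unfolding k_def by simp
  have "a / b \<le> real k"
    using real_nat_ceiling_ge[of "a / b"] unfolding k_def by simp
  then have "a \<le> b * real k"
    using assms by (simp add: pos_divide_le_eq mult.commute)
  also have "\<dots> \<le> b * (pi^2 * real k^2)"
  proof (intro mult_left_mono)
    have "1 \<le> pi^2" using pi_gt3 by (intro one_le_power) simp
    have "real k \<le> real k^2" using \<open>k \<ge> 1\<close> by (simp add: power2_eq_square)
    also have "\<dots> \<le> pi^2 * real k^2" using mult_right_mono[OF \<open>1 \<le> pi^2\<close>, of "real k^2"] by simp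
    finally show "real k \<le> pi^2 * real k^2" .
  qed (use assms in simp)
  finally have "4 * a \<le> b * (2 * pi * real k)^2" by (simp add: power_mult_distrib)
  with \<open>k \<ge> 1\<close> show ?thesis by blast
qed

lemma sec_S_test_fields_neg:
  assumes a: "a > 0" and b: "b > 0" and W: "W = 2 * pi * real k" and k: "k \<ge> 1"
    and large: "4 * a \<le> b * W^2"
  shows "sec_S a b (test_u W) (test_v (3 * a / (2 * (b * W^2))) W) < 0"
proof -
  let ?L = "inv_inertia_eigenvalue a b W"
  have "W^2 > 0" using k unfolding W by simp
  moreover have "curv_poly a (b * W^2) (3 * a / (2 * (b * W^2))) < 0"
    using curv_poly_neg[OF a large] .
  ultimately have "W^2 * curv_poly a (b * W^2) (3 * a / (2 * (b * W^2))) < 0"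
    by (rule mult_pos_neg)
  moreover have "?L j > 0" for j
    using a b by (intro inv_inertia_eigenvalue_pos) auto
  ultimately show ?thesis
    unfolding sec_S_test_fields[OF a less_imp_le[OF b] W k]
    by (intro mult_neg_pos[OF mult_neg_pos[OF mult_neg_pos]] zero_less_power)
qed

theorem theorem6p3:
  fixes a b :: real
  assumes "a > 0" and "b > 0"
  shows "\<exists>u v. vfS1 u \<and> vfS1 v \<and> sec_S a b u v < 0"
proof -
  obtain k :: nat where k: "k \<ge> 1" and large: "4 * a \<le> b * (2 * pi * real k)^2"
    using exists_large_frequency[OF assms(2)] by blast
  define W where "W = 2 * pi * real k"
  define e where "e = 3 * a / (2 * (b * W^2))"
  have "sec_S a b (test_u W) (test_v e W) < 0"
    unfolding e_def using sec_S_test_fields_neg[OF assms W_def k] large W_def by blast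
  moreover have "vfS1 (test_u W)" and "vfS1 (test_v e W)"
    unfolding test_u_def test_v_def using vfS1_trig_poly[OF W_def] by auto
  ultimately show ?thesis by blast
qed

end
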